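(* Let $G=(V,E)$, the token alphabet, the test distribution $\mathcal{D}_{\mathrm{test}}$, the program $P_{\mathrm{prog}}$, its greedy generation $\mathrm{prog}(\cdot)$ and the decoding map $\mathrm{dec}$ be as in the context. For every $k\ge1$ and every input–label pair $(\widetilde{\mathtt{inp}}^k,\widetilde{\mathtt{lab}}^k)$ in the support of $\mathcal{D}_{\mathrm{test}}$, $\mathrm{dec}(\mathrm{prog}(\widetilde{\mathtt{inp}}^k))=\mathrm{dec}(\widetilde{\mathtt{lab}}^k)$. Consequently $\mathrm{prog}(\cdot)$ minimizes the few-shot testing losses $L^k_{\mathrm{test}}:=-\Pr_{\mathcal{D}_{\mathrm{test}}}\big[\mathrm{dec}(\mathrm{prog}(\widetilde{\mathtt{inp}}^k))=\mathrm{dec}(\widetilde{\mathtt{lab}}^k)\big]$, $k=1,\dots,K-1$.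
   Context: Causal structure. Let $\mathcal{V}_{\mathrm{all}}$ be a finite alphabet of vertex symbols and $G=(V,E)$ a directed graph with $V\subseteq\mathcal{V}_{\mathrm{all}}$. Every $v\in\mathcal{V}_{\mathrm{all}}$ has a finite value set $\mathtt{VALS}(v)\subset\mathbb{Z}$ and a finite nonempty set $\mathtt{CONT}(v)$ of context tokens; these sets are pairwise disjoint and disjoint from vertex and value symbols. Each edge $e=(v_1,v_2)\in E$ carries an operation $\mathtt{op}(e)$ of the form $q\mapsto q+c_e$ ($c_e\in\mathbb{Z}$) mapping $\mathtt{VALS}(v_1)$ into $\mathtt{VALS}(v_2)$. Chains are $\mathcal{T}(G)=\{[v_1,\dots,v_n]:(v_i,v_{i+1})\in E\}$; the depth $N$ is the maximal chain length. Special tokens: $o^{\mathrm{eq}}$ ("="), $o^{\mathrm{cm}}$ (","), $o^{\mathrm{qu}}$ ("?"), $o^{\mathrm{dlm}}$ (newline). Test sequences: a chain $[v_1,\dots,v_N]\in\mathcal{T}(G)$ of length $N$ with $q_1\sim\mathrm{Uniform}(\mathtt{VALS}(v_1))$ and $q_i=\mathtt{op}(v_{i-1},v_i)(q_{i-1})$, giving $[v_1,q_1,\dots,v_N,q_N]$. Processing: $[v_1,q_1,\dots,v_L,q_L]$ becomes $[v_L,o^{\mathrm{eq}},o^{\mathrm{qu}},c(v_1)_1,\dots,c(v_1)_{l_1},v_1,o^{\mathrm{eq}},q_1,o^{\mathrm{cm}},\dots,o^{\mathrm{cm}},c(v_L)_1,\dots,c(v_L)_{l_L},v_L,o^{\mathrm{eq}},q_L]$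 with independently $l_i\sim\mathrm{Uniform}\{1,\dots,|\mathtt{CONT}(v_i)|\}$ and $c(v_i)_1,\dots,c(v_i)_{l_i}$ drawn from $\mathtt{CONT}(v_i)$ without replacement. For $k\in\{0,\dots,K\}$, take $k+1$ test sequences with the same vertex list and independent values/context tokens; $\widetilde{\mathtt{inp}}^k$ is $\widetilde{\mathtt{seq}}^{(1)},o^{\mathrm{dlm}},\dots,o^{\mathrm{dlm}},\widetilde{\mathtt{seq}}^{(k)},o^{\mathrm{dlm}}$ followed by the prefix $[v_N,o^{\mathrm{eq}},o^{\mathrm{qu}},c(v_1)^{(k+1)}_{1..l_1},v_1,o^{\mathrm{eq}},q^{(k+1)}_1,o^{\mathrm{cm}}]$ of the processed $(k+1)$-th sequence; $\widetilde{\mathtt{lab}}^k$ is the remainder of that processed sequence. This defines $\mathcal{D}_{\mathrm{test}}$. The map $\mathrm{dec}$ extracts from a processed token string the list of vertex–value pairs $[v_2,q_2,\dots,v_N,q_N]$ (the vertex and value in each occurrence of "vertex, $o^{\mathrm{eq}}$, value"). Program $P_{\mathrm{prog}}(\cdot\mid z_{1:T})$ (for sentences with at least one complete previous shot): (i) if $z_T=o^{\mathrm{cm}}$, then $z_{T-3}$ is a vertex $v_i$; find $v_i$ in previous shots and the vertex $v_{i+1}$ following it; output $\mathrm{Uniform}(\mathtt{CONT}(v_{i+1}))$. (ii) if $z_{T-k+1:T}=[c(v_j)_1,\dots,c(v_j)_k]$ is a run of context tokens of $v_j$, output $\mathrm{Uniform}(\mathtt{CONT}(v_j)\cup\{v_j\}\setminus\{c(v_j)_1,\dots,c(v_j)_k\})$.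 (iii) if $z_T$ is a vertex, output $o^{\mathrm{eq}}$ with probability 1. (iv) if $z_T=o^{\mathrm{eq}}$, $z_{T-1}=v_j$: if $v_j\notin V$ or $v_j$ is the first vertex of $V$ in the current sequence, output $\mathrm{Uniform}(\mathtt{VALS}(v_j))$; otherwise, with $v_{j_1}$ (value $q_{j_1}$) the nearest preceding vertex of $V$ in the current sequence, output $\mathtt{op}(v_{j_1},v_j)(q_{j_1})$ with probability 1. (v) if $z_T$ is a value, output $o^{\mathrm{cm}}$ with probability 1. The generation $\mathrm{prog}(\widetilde{\mathtt{inp}}^k)$ is greedy decoding: repeatedly append a token of maximal probability under $P_{\mathrm{prog}}$ (ties broken arbitrarily), until the value of the goal vertex (the vertex named at the start of the current sequence) has been produced. *)

theory Defs
  imports "HOL-Probability.Probability"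
begin

datatype ('v, 'c) tok = Vtx 'v | Val int | Ctx 'c | Eq | Cm | Qu | Dlm

record ('v, 'c) cstruct =
  Vall :: "'v set"
  Vs   :: "'v set"
  Es   :: "('v \<times> 'v) set"
  VALS :: "'v \<Rightarrow> int set"
  CONT :: "'v \<Rightarrow> 'c set"
  cst  :: "'v \<times> 'v \<Rightarrow> int"  (* op(e) = (\<lambda>q. q + cst e) *)

definition wf_struct :: "('v, 'c) cstruct \<Rightarrow> bool" where
  "wf_struct S \<longleftrightarrow>
     finite (Vall S) \<and> Vs S \<subseteq> Vall S \<and> Es S \<subseteq> Vs S \<times> Vs S \<and>
     (\<forall>v \<in> Vall S. finite (VALS S v) \<and> finite (CONT S v) \<and> CONT S v \<noteq> {}) \<and>
     (\<forall>v \<in> Vall S. \<forall>w \<in> Vall S. v \<noteq> w \<longrightarrow> CONT S v \<inter> CONT S w = {}) \<and>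
     (\<forall>(a, b) \<in> Es S. \<forall>q \<in> VALS S a. q + cst S (a, b) \<in> VALS S b)"

definition is_chain :: "('v, 'c) cstruct \<Rightarrow> 'v list \<Rightarrow> bool" where
  "is_chain S vs \<longleftrightarrow> vs \<noteq> [] \<and> set vs \<subseteq> Vs S \<and>
     (\<forall>i. Suc i < length vs \<longrightarrow> (vs ! i, vs ! Suc i) \<in> Es S)"

definition chains :: "('v, 'c) cstruct \<Rightarrow> 'v list set" where
  "chains S = {vs. is_chain S vs}"

definition depth :: "('v, 'c) cstruct \<Rightarrow> nat" where
  "depth S = Max (length ` chains S)"

definition unif :: "'a set \<Rightarrow> 'a \<Rightarrow> real" where
  "unif A t = (if finite A \<and> t \<in> A then 1 / real (card A) else 0)"

definition cur_seq :: "('v, 'c) tok list \<Rightarrow> ('v, 'c) tok list" where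
  "cur_seq z = rev (takeWhile (\<lambda>t. t \<noteq> Dlm) (rev z))"

definition prev_shots :: "('v, 'c) tok list \<Rightarrow> ('v, 'c) tok list" where
  "prev_shots z = take (length z - length (cur_seq z)) z"

definition is_vtx :: "('v, 'c) tok \<Rightarrow> bool" where
  "is_vtx t \<longleftrightarrow> (\<exists>v. t = Vtx v)"

definition next_vtx :: "'v \<Rightarrow> ('v, 'c) tok list \<Rightarrow> ('v, 'c) tok option" where
  "next_vtx v xs = (case dropWhile (\<lambda>t. t \<noteq> Vtx v) xs of
                      [] \<Rightarrow> None
                    | _ # rest \<Rightarrow> find is_vtx rest)"

definition P_prog :: "('v, 'c) cstruct \<Rightarrow> ('v, 'c) tok list \<Rightarrow> ('v, 'c) tok \<Rightarrow> real" where
  "P_prog S z t =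
    (if z = [] then 0 else
     (case last z of
        Cm \<Rightarrow>
          (if 4 \<le> length z then
             (case z ! (length z - 4) of
                Vtx vi \<Rightarrow>
                  (case next_vtx vi (prev_shots z) of
                     Some (Vtx w) \<Rightarrow> unif (Ctx ` CONT S w) t
                   | _ \<Rightarrow> 0)
              | _ \<Rightarrow> 0)
           else 0)
      | Ctx x \<Rightarrow>
          (if \<exists>v \<in> Vall S. x \<in> CONT S v then
             (let v = (SOME v. v \<in> Vall S \<and> x \<in> CONT S v);
                  run = takeWhile (\<lambda>t. \<exists>y. t = Ctx y \<and> y \<in> CONT S v) (rev z)
              in unif ((Ctx ` CONT S v \<union> {Vtx v}) - set run) t)
           else 0)
      | Vtx _ \<Rightarrow> (if t = Eq then 1 else 0)
      | Eq \<Rightarrow>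
          (if 2 \<le> length z then
             (case z ! (length z - 2) of
                Vtx vj \<Rightarrow>
                  (let cs = cur_seq z;
                       before = take (length cs - 2) cs;
                       idxs = {i. i < length before \<and> (\<exists>u \<in> Vs S. before ! i = Vtx u)}
                   in if vj \<notin> Vs S \<or> idxs = {} then unif (Val ` VALS S vj) t
                      else
                        (let p = Max idxs
                         in case before ! p of
                              Vtx u \<Rightarrow>
                                (if p + 2 < length before \<and> (u, vj) \<in> Es S then
                                   (case before ! (p + 2) of
                                      Val q \<Rightarrow> (if t = Val (q + cst S (u, vj)) then 1 else 0)
                                    | _ \<Rightarrow> 0)
                                 else 0)
                            | _ \<Rightarrow> 0))
              | _ \<Rightarrow> 0)
           else 0)
      | Val _ \<Rightarrow> (if t = Cm then 1 else 0)
      | _ \<Rightarrow> 0))"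

definition greedy_step :: "('v, 'c) cstruct \<Rightarrow> ('v, 'c) tok list \<Rightarrow> ('v, 'c) tok \<Rightarrow> bool" where
  "greedy_step S z t \<longleftrightarrow> 0 < P_prog S z t \<and> (\<forall>t'. P_prog S z t' \<le> P_prog S z t)"

(* the value of the goal vertex (named at the start of the current sequence)
   has just been produced *)
definition goal_done :: "('v, 'c) tok list \<Rightarrow> bool" where
  "goal_done z \<longleftrightarrow>
     (case cur_seq z of
        Vtx g # _ \<Rightarrow> (\<exists>pre q. z = pre @ [Vtx g, Eq, Val q])
      | _ \<Rightarrow> False)"

inductive gen :: "('v, 'c) cstruct \<Rightarrow> ('v, 'c) tok list \<Rightarrow> ('v, 'c) tok list \<Rightarrow> bool"
  for S where
  stop: "goal_done z \<Longrightarrow> gen S z []"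
| step: "\<not> goal_done z \<Longrightarrow> greedy_step S z t \<Longrightarrow> gen S (z @ [t]) out \<Longrightarrow> gen S z (t # out)"

definition infinite_run :: "('v, 'c) cstruct \<Rightarrow> ('v, 'c) tok list \<Rightarrow> bool" where
  "infinite_run S z \<longleftrightarrow>
     (\<exists>f :: nat \<Rightarrow> ('v, 'c) tok. \<forall>n.
        \<not> goal_done (z @ map f [0..<n]) \<and> greedy_step S (z @ map f [0..<n]) (f n))"

fun dec :: "('v, 'c) tok list \<Rightarrow> ('v \<times> int) list" where
  "dec (Vtx v # Eq # Val q # r) = (v, q) # dec r"
| "dec (_ # r) = dec r"
| "dec [] = []"

fun chain_vals :: "('v, 'c) cstruct \<Rightarrow> 'v list \<Rightarrow> int \<Rightarrow> int list" where
  "chain_vals S [] q = []"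
| "chain_vals S [v] q = [q]"
| "chain_vals S (u # w # r) q = q # chain_vals S (w # r) (q + cst S (u, w))"

fun join_cm :: "('v, 'c) tok list list \<Rightarrow> ('v, 'c) tok list" where
  "join_cm [] = []"
| "join_cm [b] = b"
| "join_cm (b # bs) = b @ [Cm] @ join_cm bs"

definition block :: "'v \<Rightarrow> int \<Rightarrow> 'c list \<Rightarrow> ('v, 'c) tok list" where
  "block v q cs = map Ctx cs @ [Vtx v, Eq, Val q]"

definition processed :: "('v, 'c) cstruct \<Rightarrow> 'v list \<Rightarrow> int \<Rightarrow> 'c list list \<Rightarrow> ('v, 'c) tok list" where
  "processed S vs q css =
     [Vtx (last vs), Eq, Qu] @
     join_cm
       (map (\<lambda>((v, qv), cs). block v qv cs) (zip (zip vs (chain_vals S vs q)) css))"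

definition valid_shot :: "('v, 'c) cstruct \<Rightarrow> 'v list \<Rightarrow> int \<times> 'c list list \<Rightarrow> bool" where
  "valid_shot S vs sh \<longleftrightarrow>
     fst sh \<in> VALS S (hd vs) \<and> length (snd sh) = length vs \<and>
     (\<forall>i < length vs. distinct (snd sh ! i) \<and> set (snd sh ! i) \<subseteq> CONT S (vs ! i) \<and>
        1 \<le> length (snd sh ! i) \<and> length (snd sh ! i) \<le> card (CONT S (vs ! i)))"

definition test_support :: "('v, 'c) cstruct \<Rightarrow> nat \<Rightarrow> nat \<Rightarrow>
    ('v, 'c) tok list \<Rightarrow> ('v, 'c) tok list \<Rightarrow> bool" where
  "test_support S K k inp lab \<longleftrightarrow> k \<le> K \<and>
     (\<exists>vs shots. is_chain S vs \<and> length vs = depth S \<and> length shots = Suc k \<and>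
        (\<forall>sh \<in> set shots. valid_shot S vs sh) \<and>
        (let lp = processed S vs (fst (last shots)) (snd (last shots));
             n = 3 + length (hd (snd (last shots))) + 4
         in inp = concat (map (\<lambda>sh. processed S vs (fst sh) (snd sh) @ [Dlm]) (butlast shots))
                  @ take n lp
          \<and> lab = drop n lp))"

end

theory Submission
  imports Defs
begin

(* A chain of maximal length is a simple path, so in every previous shot the vertex following
   v_(i-1) is v_i, and rule (i) of the program proposes exactly the context tokens of v_i.
   From then on the program reproduces the label block by block: context tokens of v_i,
   then v_i, "=", the value op(v_(i-1), v_i)(q_(i-1)) = q_i and ",".  Only the context tokens
   may differ from the label, and dec ignores them.  Every greedy step increases a bounded
   progress measure, so decoding stops after the value of v_N, having produced the decoded
   label; hence the success probability is 1, the minimum of the test loss. *)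

lemma dec_append_Cm: "dec (xs @ Cm # ys) = dec xs @ dec ys"
  by (induction xs rule: dec.induct) (auto split: list.splits tok.splits)

lemma dec_map_Ctx_append: "dec (map Ctx cs @ r) = dec r"
  by (induction cs) auto

lemma find_is_vtx_map_Ctx_append: "find is_vtx (map Ctx cs @ r) = find is_vtx r"
  by (induction cs) (auto simp: is_vtx_def)

lemma next_vtx_append_Vtx:
  assumes "Vtx v \<notin> set A"
  shows "next_vtx v (A @ Vtx v # B) = find is_vtx B"
proof -
  have "dropWhile (\<lambda>t. t \<noteq> Vtx v) (A @ Vtx v # B) = Vtx v # B"
    using assms by (induction A) auto
  then show ?thesis by (simp add: next_vtx_def)
qed

lemma cur_seq_append_Dlm: "Dlm \<notin> set cs \<Longrightarrow> cur_seq (P @ Dlm # cs) = cs"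
  by (simp add: cur_seq_def, subst takeWhile_append2) auto

lemma prev_shots_append_Dlm: "Dlm \<notin> set cs \<Longrightarrow> prev_shots (P @ Dlm # cs) = P @ [Dlm]"
  by (simp add: prev_shots_def cur_seq_append_Dlm)

lemma snoc3_eq_snoc3D: "xs @ [a, b, c] = ys @ [d, e, f] \<Longrightarrow> a = d \<and> b = e \<and> c = f"
  by (drule arg_cong[where f = rev]) simp

lemma join_cm_Cons: "join_cm (b # bs) = b @ concat (map ((#) Cm) bs)"
  by (induction bs arbitrary: b) auto

lemma join_cm_map_upt_split:
  assumes "a \<le> m" "m < b"
  shows "join_cm (map f [a..<b]) = concat (map (\<lambda>j. f j @ [Cm]) [a..<m]) @ join_cm (map f [m..<b])"
  using assms
proof (induction m arbitrary: a)
  case (Suc m)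
  show ?case
  proof (cases "a = Suc m")
    case False
    then have "a \<le> m" using Suc.prems by simp
    moreover have "[m..<b] = m # [Suc m..<b]" "[Suc m..<b] = Suc m # [Suc (Suc m)..<b]"
      using Suc.prems by (simp_all add: upt_conv_Cons)
    ultimately show ?thesis using Suc by (simp add: join_cm_Cons)
  qed simp
qed simp

section \<open>Chains\<close>

lemma length_chain_vals [simp]: "length (chain_vals S vs q) = length vs"
  by (induction S vs q rule: chain_vals.induct) auto

lemma chain_vals_nth_0: "vs \<noteq> [] \<Longrightarrow> chain_vals S vs q ! 0 = q"
  by (induction S vs q rule: chain_vals.induct) auto

lemma chain_vals_nth_Suc:
  "Suc j < length vs \<Longrightarrow>
   chain_vals S vs q ! Suc j = chain_vals S vs q ! j + cst S (vs ! j, vs ! Suc j)"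
proof (induction S vs q arbitrary: j rule: chain_vals.induct)
  case (3 S u w r q)
  then show ?case by (cases j) (simp_all add: chain_vals_nth_0)
qed auto

lemma longest_chain_distinct:
  assumes ch: "is_chain S vs" and fin: "finite (chains S)" and len: "length vs = depth S"
  shows "distinct vs"
proof (rule ccontr)
  assume "\<not> distinct vs"
  then obtain a b where ab: "a < b" "b < length vs" "vs ! a = vs ! b"
    by (metis distinct_conv_nth linorder_neqE_nat)
  \<comment> \<open>pump the cycle between positions a and b once more\<close>
  define ws where "ws = take b vs @ drop a vs"
  have lw: "length ws = b + (length vs - a)" using ab by (simp add: ws_def)
  have nth: "ws ! j = vs ! (if j < b then j else a + (j - b))" if "j < length ws" for j
    using that ab by (simp add: ws_def nth_append)
  have E: "\<And>i. Suc i < length vs \<Longrightarrow> (vs ! i, vs ! Suc i) \<in> Es S"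
    using ch by (simp add: is_chain_def)
  have "is_chain S ws"
    unfolding is_chain_def
  proof (intro conjI allI impI)
    show "ws \<noteq> []" using lw ab by auto
    have "set ws \<subseteq> set vs" unfolding ws_def by (auto dest: in_set_takeD in_set_dropD)
    then show "set ws \<subseteq> Vs S" using ch unfolding is_chain_def by blast
  next
    fix j assume j: "Suc j < length ws"
    consider "Suc j < b" | "Suc j = b" | "b \<le> j" by linarith
    then show "(ws ! j, ws ! Suc j) \<in> Es S"
    proof cases
      case 3
      then have "Suc (a + (j - b)) < length vs" using j lw by simp
      then show ?thesis using 3 nth[of j] nth[of "Suc j"] j E[of "a + (j - b)"]
        by (simp add: Suc_diff_le)
    qed (use nth[of j] nth[of "Suc j"] j E[of j] ab in simp_all)
  qed
  then have "length ws \<le> depth S"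
    unfolding depth_def using fin by (intro Max_ge) (auto simp: chains_def)
  then show False using lw ab len by simp
qed

section \<open>Evaluating the program\<close>

lemma greedy_step_unif_iff:
  assumes "\<And>t. P_prog S z t = unif A t" "finite A" "A \<noteq> {}"
  shows "greedy_step S z t \<longleftrightarrow> t \<in> A"
proof -
  have "card A > 0" using assms(2,3) by (simp add: card_gt_0_iff)
  then show ?thesis
    unfolding greedy_step_def assms(1) unif_def using assms(2) by (auto split: if_splits)
qed

lemma greedy_step_point_iff:
  assumes "\<And>t. P_prog S z t = (if t = a then 1 else 0)"
  shows "greedy_step S z t \<longleftrightarrow> t = a"
  unfolding greedy_step_def assms by auto

lemma P_prog_last_Cm:
  "last z = Cm \<Longrightarrow> 4 \<le> length z \<Longrightarrow> z ! (length z - 4) = Vtx v \<Longrightarrow>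
   next_vtx v (prev_shots z) = Some (Vtx w) \<Longrightarrow> P_prog S z t = unif (Ctx ` CONT S w) t"
  by (auto simp: P_prog_def)

lemma P_prog_last_Vtx: "z \<noteq> [] \<Longrightarrow> last z = Vtx v \<Longrightarrow> P_prog S z t = (if t = Eq then 1 else 0)"
  by (simp add: P_prog_def)

lemma P_prog_last_Val: "z \<noteq> [] \<Longrightarrow> last z = Val q \<Longrightarrow> P_prog S z t = (if t = Cm then 1 else 0)"
  by (simp add: P_prog_def)

lemma P_prog_last_Ctx:
  assumes "z \<noteq> []" "last z = Ctx x" "v \<in> Vall S" "x \<in> CONT S v"
    "\<And>w. w \<in> Vall S \<Longrightarrow> x \<in> CONT S w \<Longrightarrow> w = v"
  shows "P_prog S z t = unif ((Ctx ` CONT S v \<union> {Vtx v}) -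
            set (takeWhile (\<lambda>t. \<exists>y. t = Ctx y \<and> y \<in> CONT S v) (rev z))) t"
proof -
  have "(SOME v. v \<in> Vall S \<and> x \<in> CONT S v) = v"
    using assms(3-5) by blast
  then show ?thesis using assms(1-4) by (auto simp: P_prog_def Let_def)
qed

lemma P_prog_last_Eq:
  assumes "last z = Eq" "z ! (length z - 2) = Vtx v" "v \<in> Vs S"
    "cur_seq z = B @ [Vtx v, Eq]" "p + 2 < length B" "B ! p = Vtx u" "u \<in> Vs S"
    "\<And>j. p < j \<Longrightarrow> j < length B \<Longrightarrow> \<not> is_vtx (B ! j)"
    "(u, v) \<in> Es S" "B ! (p + 2) = Val q"
  shows "P_prog S z t = (if t = Val (q + cst S (u, v)) then 1 else 0)"
proof -
  have "length (cur_seq z) \<le> length z"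
    unfolding cur_seq_def using length_takeWhile_le[of _ "rev z"] by simp
  then have "2 \<le> length z" using assms(4) by simp
  define idxs where "idxs = {i. i < length B \<and> (\<exists>u \<in> Vs S. B ! i = Vtx u)}"
  have p: "p \<in> idxs" using assms(5-7) by (auto simp: idxs_def)
  have "Max idxs = p"
  proof (rule Max_eqI)
    show "y \<le> p" if "y \<in> idxs" for y
      using that assms(8)[of y] by (force simp: idxs_def is_vtx_def)
  qed (use p in \<open>auto simp: idxs_def\<close>)
  with \<open>2 \<le> length z\<close> show ?thesis
    using assms p unfolding P_prog_def
    by (auto simp: Let_def idxs_def[symmetric] nth_append)
qed

section \<open>Greedy decoding along a decreasing variant\<close>

locale greedy_variant =
  fixes S :: "('v, 'c) cstruct" and I :: "('v, 'c) tok list \<Rightarrow> nat \<Rightarrow> bool"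
  assumes progress: "I z m \<Longrightarrow> \<not> goal_done z \<Longrightarrow>
    (\<exists>t. greedy_step S z t) \<and> (\<forall>t. greedy_step S z t \<longrightarrow> (\<exists>m' < m. I (z @ [t]) m'))"
begin

lemma gen_exists: "I z m \<Longrightarrow> \<exists>out. gen S z out"
proof (induction m arbitrary: z rule: less_induct)
  case (less m)
  show ?case
  proof (cases "goal_done z")
    case False
    with progress[OF less.prems] obtain t m' where
      t: "greedy_step S z t" and "m' < m" "I (z @ [t]) m'" by blast
    with less.IH obtain out where "gen S (z @ [t]) out" by blast
    then show ?thesis using gen.step[OF False t] by blast
  qed (use gen.stop in blast)
qed

lemma not_infinite_run: "I z m \<Longrightarrow> \<not> infinite_run S z"
proof
  assume z: "I z m" and "infinite_run S z"
  then obtain f where f: "\<And>n. \<not> goal_done (z @ map f [0..<n]) \<and>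
      greedy_step S (z @ map f [0..<n]) (f n)" unfolding infinite_run_def by blast
  have "\<exists>m'. I (z @ map f [0..<n]) m' \<and> m' + n \<le> m" for n
  proof (induction n)
    case (Suc n)
    then obtain m' where "I (z @ map f [0..<n]) m'" "m' + n \<le> m" by blast
    with progress f[of n] obtain m'' where "m'' < m'" "I (z @ map f [0..<n] @ [f n]) m''"
      by fastforce
    then show ?case using \<open>m' + n \<le> m\<close> by (intro exI[of _ m'']) simp
  qed (use z in auto)
  from this[of "Suc m"] show False by auto
qed

lemma gen_ends_in_invariant: "gen S z out \<Longrightarrow> I z m \<Longrightarrow> \<exists>m'. I (z @ out) m' \<and> goal_done (z @ out)"
proof (induction z out arbitrary: m rule: gen.induct)
  case (step z t out)
  then obtain m' where "I (z @ [t]) m'" using progress by blast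
  from step.IH[OF this] show ?case by simp
qed auto

end

section \<open>Processed test sequences\<close>

lemma dec_Cm_blocks:
  "dec (concat (map (\<lambda>j. Cm # block (vs ! j) (vals ! j) (css ! j)) js))
   = map (\<lambda>j. (vs ! j, vals ! j)) js"
  by (induction js) (auto simp: block_def dec_map_Ctx_append)

lemma processed_split:
  fixes S :: "('v, 'c) cstruct" and q :: int
  assumes "length css = length vs" "1 \<le> i" "i < length vs"
  defines "vals \<equiv> chain_vals S vs q"
  shows "processed S vs q css = [Vtx (last vs), Eq, Qu] @
     concat (map (\<lambda>j. block (vs ! j) (vals ! j) (css ! j) @ [Cm]) [0..<i - 1]) @
     map Ctx (css ! (i - 1)) @ [Vtx (vs ! (i - 1)), Eq, Val (vals ! (i - 1)), Cm] @
     map Ctx (css ! i) @ Vtx (vs ! i) # Eq # Val (vals ! i) #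
     concat (map (\<lambda>j. Cm # block (vs ! j) (vals ! j) (css ! j)) [Suc i..<length vs])"
proof -
  let ?f = "\<lambda>j. block (vs ! j) (vals ! j) (css ! j)"
  have "map (\<lambda>((v, qv), cs). block v qv cs) (zip (zip vs vals) css) = map ?f [0..<length vs]"
    using assms(1) by (intro nth_equalityI) (auto simp: vals_def)
  then have "processed S vs q css = [Vtx (last vs), Eq, Qu] @ join_cm (map ?f [0..<length vs])"
    by (simp add: processed_def vals_def)
  moreover have "join_cm (map ?f [0..<length vs]) =
      concat (map (\<lambda>j. ?f j @ [Cm]) [0..<i - 1]) @ join_cm (map ?f [i - 1..<length vs])"
    using assms by (intro join_cm_map_upt_split) auto
  moreover have "[i - 1..<length vs] = (i - 1) # i # [Suc i..<length vs]"
    using assms(2,3) by (simp add: upt_conv_Cons)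
  ultimately show ?thesis by (simp add: join_cm_Cons block_def comp_def)
qed

lemma next_vtx_processed:
  assumes "distinct vs" "length css = length vs" "1 \<le> i" "i < length vs"
  shows "next_vtx (vs ! (i - 1)) (processed S vs q css @ rest) = Some (Vtx (vs ! i))"
proof -
  define vals where "vals = chain_vals S vs q"
  define A where "A = [Vtx (last vs), Eq, Qu] @
     concat (map (\<lambda>j. block (vs ! j) (vals ! j) (css ! j) @ [Cm]) [0..<i - 1]) @
     map Ctx (css ! (i - 1))"
  define B where "B = [Eq, Val (vals ! (i - 1)), Cm] @
     map Ctx (css ! i) @ Vtx (vs ! i) # Eq # Val (vals ! i) #
     concat (map (\<lambda>j. Cm # block (vs ! j) (vals ! j) (css ! j)) [Suc i..<length vs]) @ rest"
  have split: "processed S vs q css @ rest = A @ Vtx (vs ! (i - 1)) # B"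
    unfolding processed_split[OF assms(2-4)] A_def B_def vals_def by simp
  have "last vs = vs ! (length vs - 1)"
    using assms(4) by (cases vs rule: rev_cases) (auto simp: last_conv_nth)
  then have "Vtx (vs ! (i - 1)) \<notin> set A"
    using assms(1,3,4) by (auto simp: A_def block_def nth_eq_iff_index_eq)
  with split show ?thesis
    by (simp add: next_vtx_append_Vtx B_def is_vtx_def find_is_vtx_map_Ctx_append)
qed

section \<open>Following the label\<close>

text \<open>The previous shots are P' @ [Dlm].  A state of the current sequence consists of the
  index i of the block being generated, the tokens H between the goal vertex and block i - 1,
  the context tokens ws of v_i chosen so far, and the number ph of tokens of "v_i = q_i"
  already emitted.\<close>

locale follows_label =
  fixes S :: "('v, 'c) cstruct" and vs :: "'v list" and vals :: "int list"
    and P' :: "('v, 'c) tok list"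
  assumes wf: "wf_struct S"
    and len: "2 \<le> length vs"
    and dist: "distinct vs"
    and chain: "is_chain S vs"
    and vals_step: "\<And>j. Suc j < length vs \<Longrightarrow> vals ! Suc j = vals ! j + cst S (vs ! j, vs ! Suc j)"
    and successor: "\<And>i. 1 \<le> i \<Longrightarrow> i < length vs \<Longrightarrow>
          next_vtx (vs ! (i - 1)) (P' @ [Dlm]) = Some (Vtx (vs ! i))"
begin

abbreviation pairs :: "nat \<Rightarrow> ('v \<times> int) list" where
  "pairs n \<equiv> map (\<lambda>j. (vs ! j, vals ! j)) [0..<n]"

definition on_track :: "nat \<Rightarrow> ('v, 'c) tok list \<Rightarrow> 'c list \<Rightarrow> nat \<Rightarrow> ('v, 'c) tok list \<Rightarrow> bool" where
  "on_track i H ws ph cs \<longleftrightarrow> 1 \<le> i \<and> i < length vs \<and> ph \<le> 3 \<and> Dlm \<notin> set H \<and>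
     dec (Vtx (last vs) # H @ [Vtx (vs ! (i - 1)), Eq, Val (vals ! (i - 1))]) = pairs i \<and>
     distinct ws \<and> set ws \<subseteq> CONT S (vs ! i) \<and>
     cs = Vtx (last vs) # H @ [Vtx (vs ! (i - 1)), Eq, Val (vals ! (i - 1)), Cm]
          @ map Ctx ws @ take ph [Vtx (vs ! i), Eq, Val (vals ! i)]"

definition max_ctx :: nat where
  "max_ctx = (\<Sum>v \<in> set vs. card (CONT S v))"

definition rank :: "nat \<Rightarrow> nat \<Rightarrow> nat" where
  "rank i a = (length vs - i) * (max_ctx + 4) - a"

definition reached :: "('v, 'c) tok list \<Rightarrow> nat \<Rightarrow> bool" where
  "reached z m \<longleftrightarrow> (\<exists>i H ws ph cs. z = P' @ Dlm # cs \<and> on_track i H ws ph cs \<and>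
     m = rank i (length ws + ph))"

lemma vs_in_Vs: "j < length vs \<Longrightarrow> vs ! j \<in> Vs S"
  using chain by (auto simp: is_chain_def)

lemma vs_in_Vall: "j < length vs \<Longrightarrow> vs ! j \<in> Vall S"
  using vs_in_Vs wf by (auto simp: wf_struct_def)

lemma CONT_vs: "j < length vs \<Longrightarrow> finite (CONT S (vs ! j)) \<and> CONT S (vs ! j) \<noteq> {}"
  using vs_in_Vall wf by (auto simp: wf_struct_def)

lemma CONT_vs_unique:
  "j < length vs \<Longrightarrow> x \<in> CONT S (vs ! j) \<Longrightarrow> w \<in> Vall S \<Longrightarrow> x \<in> CONT S w \<Longrightarrow> w = vs ! j"
  using vs_in_Vall[of j] wf unfolding wf_struct_def by blast

lemma edge_vs: "1 \<le> i \<Longrightarrow> i < length vs \<Longrightarrow> (vs ! (i - 1), vs ! i) \<in> Es S"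
  using chain unfolding is_chain_def by (metis Suc_diff_1 less_le_trans zero_less_one)

lemma on_track_length_ws:
  assumes "on_track i H ws ph cs"
  shows "length ws \<le> max_ctx"
proof -
  have i: "i < length vs" and ws: "distinct ws" "set ws \<subseteq> CONT S (vs ! i)"
    using assms by (auto simp: on_track_def)
  have "length ws = card (set ws)" using ws(1) by (simp add: distinct_card)
  also have "\<dots> \<le> card (CONT S (vs ! i))" using ws(2) CONT_vs[OF i] by (simp add: card_mono)
  also have "\<dots> \<le> max_ctx" unfolding max_ctx_def by (rule member_le_sum) (use i in auto)
  finally show ?thesis .
qed

lemma rank_Suc_less: "i < length vs \<Longrightarrow> a < max_ctx + 4 \<Longrightarrow> rank i (Suc a) < rank i a"
  by (cases "length vs - i") (auto simp: rank_def)

lemma rank_next_less: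
  assumes "Suc i < length vs" "a < max_ctx + 4"
  shows "rank (Suc i) 0 < rank i a"
proof -
  have "length vs - i = Suc (length vs - Suc i)" using assms(1) by simp
  then show ?thesis using assms(2) by (simp add: rank_def)
qed

lemma on_track_no_Dlm: "on_track i H ws ph cs \<Longrightarrow> Dlm \<notin> set cs"
  unfolding on_track_def by (auto dest: in_set_takeD)

lemma goal_done_iff:
  assumes "on_track i H ws ph cs"
  shows "goal_done (P' @ Dlm # cs) \<longleftrightarrow> ph = 3 \<and> i = length vs - 1"
proof -
  let ?X = "Vtx (last vs) # H @ [Vtx (vs ! (i - 1)), Eq, Val (vals ! (i - 1)), Cm] @ map Ctx ws"
  have i: "1 \<le> i" "i < length vs" "ph \<le> 3" "vs \<noteq> []"
    and cs: "cs = ?X @ take ph [Vtx (vs ! i), Eq, Val (vals ! i)]"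
    using assms by (auto simp: on_track_def)
  have "goal_done (P' @ Dlm # cs) \<longleftrightarrow> (\<exists>pre q. P' @ Dlm # cs = pre @ [Vtx (last vs), Eq, Val q])"
    unfolding goal_done_def cur_seq_append_Dlm[OF on_track_no_Dlm[OF assms]] using cs by simp
  also have "\<dots> \<longleftrightarrow> ph = 3 \<and> vs ! i = last vs"
  proof (cases "ph = 3")
    case True
    then have "P' @ Dlm # cs = (P' @ Dlm # ?X) @ [Vtx (vs ! i), Eq, Val (vals ! i)]"
      using cs by (simp add: numeral_eq_Suc)
    then show ?thesis using True snoc3_eq_snoc3D by fastforce
  next
    case False
    then have "ph = 0 \<or> ph = 1 \<or> ph = 2" using i by auto
    then have "\<nexists>q. last (P' @ Dlm # cs) = Val q" using cs by (auto simp: last_map numeral_eq_Suc)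
    moreover have "last (pre @ [Vtx (last vs), Eq, Val q]) = Val q" for pre q by simp
    ultimately show ?thesis using False by metis
  qed
  also have "vs ! i = last vs \<longleftrightarrow> i = length vs - 1"
    using dist i last_conv_nth[of vs] by (auto simp: nth_eq_iff_index_eq)
  finally show ?thesis .
qed

lemma on_track_done:
  assumes "on_track i H ws ph cs" "goal_done (P' @ Dlm # cs)"
  shows "dec cs = pairs (length vs)"
proof -
  have last_block: "ph = 3" "length vs = Suc i" using goal_done_iff[OF assms(1)] assms len by auto
  have "cs = (Vtx (last vs) # H @ [Vtx (vs ! (i - 1)), Eq, Val (vals ! (i - 1))])
          @ Cm # (map Ctx ws @ [Vtx (vs ! i), Eq, Val (vals ! i)])"
   and "dec (Vtx (last vs) # H @ [Vtx (vs ! (i - 1)), Eq, Val (vals ! (i - 1))]) = pairs i"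
    using assms(1) last_block(1) by (auto simp: on_track_def numeral_eq_Suc)
  then show ?thesis
    using last_block(2) by (simp only: dec_append_Cm dec_map_Ctx_append) simp
qed

lemma on_track_Ctx:
  "on_track i H ws 0 cs \<Longrightarrow> c \<in> CONT S (vs ! i) \<Longrightarrow> c \<notin> set ws \<Longrightarrow>
   on_track i H (ws @ [c]) 0 (cs @ [Ctx c])"
  by (simp add: on_track_def)

lemma on_track_Suc_phase:
  assumes "on_track i H ws ph cs" "ph < 3"
  shows "on_track i H ws (Suc ph) (cs @ [[Vtx (vs ! i), Eq, Val (vals ! i)] ! ph])"
proof -
  have "take ph [Vtx (vs ! i), Eq, Val (vals ! i)] @ [[Vtx (vs ! i), Eq, Val (vals ! i)] ! ph] =
      take (Suc ph) [Vtx (vs ! i), Eq, Val (vals ! i)]"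
    using assms(2) by (intro take_Suc_conv_app_nth[symmetric]) simp
  with assms show ?thesis unfolding on_track_def by (simp del: take_Suc_Cons)
qed

lemma on_track_next_block:
  assumes "on_track i H ws 3 cs" "Suc i < length vs"
  shows "on_track (Suc i) (H @ [Vtx (vs ! (i - 1)), Eq, Val (vals ! (i - 1)), Cm] @ map Ctx ws)
           [] 0 (cs @ [Cm])"
proof -
  have "dec (Vtx (last vs) # (H @ [Vtx (vs ! (i - 1)), Eq, Val (vals ! (i - 1)), Cm] @ map Ctx ws)
          @ [Vtx (vs ! i), Eq, Val (vals ! i)])
      = dec ((Vtx (last vs) # H @ [Vtx (vs ! (i - 1)), Eq, Val (vals ! (i - 1))])
          @ Cm # (map Ctx ws @ [Vtx (vs ! i), Eq, Val (vals ! i)]))"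
    by simp
  also have "\<dots> = pairs (Suc i)"
    using assms(1) by (simp only: dec_append_Cm dec_map_Ctx_append) (simp add: on_track_def)
  finally show ?thesis using assms by (auto simp: on_track_def numeral_eq_Suc)
qed

lemma greedy_after_Cm:
  assumes "on_track i H [] 0 cs"
  shows "greedy_step S (P' @ Dlm # cs) t \<longleftrightarrow> t \<in> Ctx ` CONT S (vs ! i)"
proof (rule greedy_step_unif_iff)
  let ?u = "vs ! (i - 1)"
  have i: "1 \<le> i" "i < length vs"
    and z: "P' @ Dlm # cs = (P' @ Dlm # Vtx (last vs) # H) @ [Vtx ?u, Eq, Val (vals ! (i - 1)), Cm]"
    using assms by (auto simp: on_track_def)
  have "prev_shots (P' @ Dlm # cs) = P' @ [Dlm]"
    using prev_shots_append_Dlm on_track_no_Dlm[OF assms] by blast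
  then show "P_prog S (P' @ Dlm # cs) t = unif (Ctx ` CONT S (vs ! i)) t" for t
    using successor[OF i] by (intro P_prog_last_Cm[of _ ?u]) (simp_all add: z nth_append)
  show "finite (Ctx ` CONT S (vs ! i))" "Ctx ` CONT S (vs ! i) \<noteq> {}" using CONT_vs[OF i(2)] by auto
qed

lemma greedy_after_Ctx:
  assumes "on_track i H ws 0 cs" "ws \<noteq> []"
  shows "greedy_step S (P' @ Dlm # cs) t \<longleftrightarrow> t \<in> (Ctx ` CONT S (vs ! i) \<union> {Vtx (vs ! i)}) - Ctx ` set ws"
proof (rule greedy_step_unif_iff)
  let ?v = "vs ! i"
  have i: "i < length vs" and ws: "set ws \<subseteq> CONT S ?v"
    and cs: "cs = Vtx (last vs) # H @ [Vtx (vs ! (i - 1)), Eq, Val (vals ! (i - 1)), Cm] @ map Ctx ws"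
    using assms by (auto simp: on_track_def)
  have lw: "last ws \<in> CONT S ?v" using ws assms(2) by auto
  have "takeWhile (\<lambda>t. \<exists>y. t = Ctx y \<and> y \<in> CONT S ?v) (rev (P' @ Dlm # cs)) = rev (map Ctx ws)"
    using ws by (simp add: cs, subst takeWhile_append2) auto
  then show "P_prog S (P' @ Dlm # cs) t = unif ((Ctx ` CONT S ?v \<union> {Vtx ?v}) - Ctx ` set ws) t" for t
    using P_prog_last_Ctx[OF _ _ vs_in_Vall[OF i] lw CONT_vs_unique[OF i lw]] assms(2)
    by (simp add: cs last_map)
  show "finite ((Ctx ` CONT S ?v \<union> {Vtx ?v}) - Ctx ` set ws)"
    using CONT_vs[OF i] by auto
qed auto

lemma greedy_after_Vtx:
  assumes "on_track i H ws 1 cs"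
  shows "greedy_step S (P' @ Dlm # cs) t \<longleftrightarrow> t = Eq"
  using assms by (intro greedy_step_point_iff P_prog_last_Vtx[of _ "vs ! i"]) (auto simp: on_track_def)

lemma greedy_after_Eq:
  assumes "on_track i H ws 2 cs"
  shows "greedy_step S (P' @ Dlm # cs) t \<longleftrightarrow> t = Val (vals ! i)"
proof -
  let ?u = "vs ! (i - 1)" and ?v = "vs ! i"
  define B where "B = Vtx (last vs) # H @ [Vtx ?u, Eq, Val (vals ! (i - 1)), Cm] @ map Ctx ws"
  have i: "1 \<le> i" "i < length vs" and cs: "cs = B @ [Vtx ?v, Eq]"
    using assms by (auto simp: on_track_def B_def numeral_eq_Suc)
  \<comment> \<open>the nearest vertex of V before v_i is v_(i-1), at position p\<close>
  define p where "p = Suc (length H)"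
  have "\<not> is_vtx (B ! j)" if "p < j" "j < length B" for j
  proof -
    have "B ! j \<in> set (Eq # Val (vals ! (i - 1)) # Cm # map Ctx ws)"
      using that by (auto simp: B_def p_def nth_append nth_Cons' split: if_splits)
    then show ?thesis by (auto simp: is_vtx_def)
  qed
  then have "P_prog S (P' @ Dlm # cs) t = (if t = Val (vals ! (i - 1) + cst S (?u, ?v)) then 1 else 0)" for t
    using vs_in_Vs edge_vs[OF i] i cur_seq_append_Dlm[OF on_track_no_Dlm[OF assms]]
    by (intro P_prog_last_Eq[where B = B and p = p]) (auto simp: cs B_def p_def nth_append)
  moreover have "vals ! (i - 1) + cst S (?u, ?v) = vals ! i"
    using vals_step[of "i - 1"] i by simp
  ultimately show ?thesis using greedy_step_point_iff by metis
qed

lemma greedy_after_Val: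
  assumes "on_track i H ws 3 cs"
  shows "greedy_step S (P' @ Dlm # cs) t \<longleftrightarrow> t = Cm"
  using assms
  by (intro greedy_step_point_iff P_prog_last_Val[of _ "vals ! i"]) (auto simp: on_track_def numeral_eq_Suc)

lemma reached_intro: "on_track i H ws ph cs \<Longrightarrow> reached (P' @ Dlm # cs) (rank i (length ws + ph))"
  unfolding reached_def by blast

lemma reached_within_block:
  assumes "on_track i H ws ph cs" "on_track i H ws' ph' (cs @ [t])"
    "length ws' + ph' = Suc (length ws + ph)"
  shows "\<exists>m' < rank i (length ws + ph). reached (P' @ Dlm # cs @ [t]) m'"
proof -
  have "i < length vs" "length ws + ph < max_ctx + 4"
    using assms(1) on_track_length_ws[OF assms(1)] by (auto simp: on_track_def)
  then have "rank i (length ws' + ph') < rank i (length ws + ph)"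
    using assms(3) rank_Suc_less by simp
  then show ?thesis using reached_intro[OF assms(2)] by auto
qed

lemma reached_progress:
  assumes "reached z m" "\<not> goal_done z"
  shows "(\<exists>t. greedy_step S z t) \<and> (\<forall>t. greedy_step S z t \<longrightarrow> (\<exists>m' < m. reached (z @ [t]) m'))"
proof -
  obtain i H ws ph cs where z: "z = P' @ Dlm # cs" and st: "on_track i H ws ph cs"
    and m: "m = rank i (length ws + ph)"
    using assms(1) unfolding reached_def by blast
  have i: "i < length vs" "ph \<le> 3" using st by (auto simp: on_track_def)
  have next_token: "\<exists>m' < m. reached (z @ [[Vtx (vs ! i), Eq, Val (vals ! i)] ! ph]) m'" if "ph < 3"
    using reached_within_block[OF st on_track_Suc_phase[OF st that]] z m by simp
  have fresh_Ctx: "\<exists>m' < m. reached (z @ [Ctx c]) m'"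
    if "ph = 0" "c \<in> CONT S (vs ! i)" "c \<notin> set ws" for c
    using reached_within_block[OF st on_track_Ctx[OF _ that(2,3)]] st that(1) z m by simp
  consider "ph = 0" "ws = []" | "ph = 0" "ws \<noteq> []" | "ph = 1" | "ph = 2" | "ph = 3"
    using i by linarith
  then show ?thesis
  proof cases
    case 1
    then have "greedy_step S z t \<longleftrightarrow> t \<in> Ctx ` CONT S (vs ! i)" for t
      using greedy_after_Cm st z by simp
    then show ?thesis using CONT_vs[OF i(1)] fresh_Ctx 1 by auto
  next
    case 2
    then have "greedy_step S z t \<longleftrightarrow> t \<in> (Ctx ` CONT S (vs ! i) \<union> {Vtx (vs ! i)}) - Ctx ` set ws" for t
      using greedy_after_Ctx st z by simp
    then show ?thesis using fresh_Ctx next_token 2 by auto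
  next
    case 3
    then have "greedy_step S z t \<longleftrightarrow> t = Eq" for t
      using greedy_after_Vtx st z by simp
    then show ?thesis using next_token 3 by simp
  next
    case 4
    then have "greedy_step S z t \<longleftrightarrow> t = Val (vals ! i)" for t
      using greedy_after_Eq st z by simp
    then show ?thesis using next_token 4 by simp
  next
    case 5
    then have st3: "on_track i H ws 3 cs" using st by simp
    have next_i: "Suc i < length vs" using goal_done_iff[OF st3] assms(2) i z by auto
    have "greedy_step S z t \<longleftrightarrow> t = Cm" for t
      unfolding z by (rule greedy_after_Val[OF st3])
    moreover have "reached (z @ [Cm]) (rank (Suc i) 0)"
      using reached_intro[OF on_track_next_block[OF st3 next_i]] z by simp
    moreover have "rank (Suc i) 0 < m"
      using rank_next_less[OF next_i] on_track_length_ws[OF st3] m 5 by simp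
    ultimately show ?thesis by auto
  qed
qed

sublocale greedy_variant S reached
  by unfold_locales (rule reached_progress)

lemma greedy_decoding_follows_label:
  assumes "on_track i H ws ph cs"
  shows "(\<exists>out. gen S (P' @ Dlm # cs) out)" "\<not> infinite_run S (P' @ Dlm # cs)"
    "gen S (P' @ Dlm # cs) out \<Longrightarrow> dec (cs @ out) = pairs (length vs)"
proof -
  note r = reached_intro[OF assms]
  show "\<exists>out. gen S (P' @ Dlm # cs) out" using gen_exists[OF r] .
  show "\<not> infinite_run S (P' @ Dlm # cs)" using not_infinite_run[OF r] .
  assume "gen S (P' @ Dlm # cs) out"
  from gen_ends_in_invariant[OF this r] obtain cs' i' H' ws' ph' where
    "P' @ Dlm # cs @ out = P' @ Dlm # cs'" "on_track i' H' ws' ph' cs'" "goal_done (P' @ Dlm # cs')"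
    unfolding reached_def by auto
  then show "dec (cs @ out) = pairs (length vs)" using on_track_done by simp
qed

end

section \<open>Few-shot test inputs\<close>

lemma processed_first_block:
  fixes S :: "('v, 'c) cstruct" and q :: int
  assumes "length css = length vs" "2 \<le> length vs"
  defines "n \<equiv> 3 + length (hd css) + 4" and "vals \<equiv> chain_vals S vs q"
  shows "take n (processed S vs q css) =
      Vtx (last vs) # ([Eq, Qu] @ map Ctx (css ! 0)) @ [Vtx (vs ! 0), Eq, Val (vals ! 0), Cm]"
    and "dec (drop n (processed S vs q css)) = map (\<lambda>j. (vs ! j, vals ! j)) [1..<length vs]"
proof -
  define C0 where "C0 = Vtx (last vs) # ([Eq, Qu] @ map Ctx (css ! 0)) @ [Vtx (vs ! 0), Eq, Val (vals ! 0), Cm]"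
  define REST where "REST = map Ctx (css ! 1) @ Vtx (vs ! 1) # Eq # Val (vals ! 1) #
     concat (map (\<lambda>j. Cm # block (vs ! j) (vals ! j) (css ! j)) [2..<length vs])"
  have "processed S vs q css = C0 @ REST"
    using processed_split[OF assms(1), of 1 S q] assms(2)
    unfolding C0_def REST_def vals_def by (simp add: numeral_2_eq_2)
  moreover have "n = length C0"
    using assms(1,2) by (cases css) (auto simp: n_def C0_def)
  ultimately show "take n (processed S vs q css) = C0" and "dec (drop n (processed S vs q css)) =
      map (\<lambda>j. (vs ! j, vals ! j)) [1..<length vs]"
    using assms(2) by (simp_all add: REST_def dec_map_Ctx_append dec_Cm_blocks upt_conv_Cons numeral_2_eq_2)
qed

lemma test_support_split:
  fixes S :: "('v, 'c) cstruct"
  assumes "test_support S K k inp lab" "1 \<le> k"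
  obtains vs q css P' q_shot css_shot rest where "is_chain S vs" "length vs = depth S"
    "length css = length vs" "length css_shot = length vs" "P' @ [Dlm] = processed S vs q_shot css_shot @ rest"
    "inp = P' @ Dlm # take (3 + length (hd css) + 4) (processed S vs q css)"
    "lab = drop (3 + length (hd css) + 4) (processed S vs q css)"
proof -
  obtain vs shots where ch: "is_chain S vs" and lv: "length vs = depth S"
    and ls: "length shots = Suc k" and valid: "\<forall>sh \<in> set shots. valid_shot S vs sh"
    and inp: "inp = concat (map (\<lambda>sh. processed S vs (fst sh) (snd sh) @ [Dlm]) (butlast shots))
        @ take (3 + length (hd (snd (last shots))) + 4) (processed S vs (fst (last shots)) (snd (last shots)))"
    and lab: "lab = drop (3 + length (hd (snd (last shots))) + 4) (processed S vs (fst (last shots)) (snd (last shots)))"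
    using assms(1) unfolding test_support_def Let_def by blast
  define prev where "prev = concat (map (\<lambda>sh. processed S vs (fst sh) (snd sh) @ [Dlm]) (butlast shots))"
  have length_css: "length (snd sh) = length vs" if "sh \<in> set shots" for sh
    using valid that by (simp add: valid_shot_def)
  have "butlast shots \<noteq> []" using ls assms(2) by (cases shots rule: rev_cases) auto
  then obtain sh0 shs where shs: "butlast shots = sh0 # shs"
    by (cases "butlast shots") auto
  have "sh0 \<in> set shots" using shs by (metis in_set_butlastD list.set_intros(1))
  moreover have "last shots \<in> set shots" using ls by (cases shots rule: rev_cases) auto
  moreover have prev_Dlm: "butlast prev @ [Dlm] = prev"
    unfolding prev_def shs by (cases shs rule: rev_cases) (auto simp: butlast_append)
  moreover have "inp = (butlast prev @ [Dlm]) @ take (3 + length (hd (snd (last shots))) + 4)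
      (processed S vs (fst (last shots)) (snd (last shots)))"
    unfolding prev_Dlm using inp by (simp add: prev_def)
  ultimately show thesis
    using that[OF ch lv, where q = "fst (last shots)" and css = "snd (last shots)" and P' = "butlast prev"
        and q_shot = "fst sh0" and css_shot = "snd sh0"
        and rest = "Dlm # concat (map (\<lambda>sh. processed S vs (fst sh) (snd sh) @ [Dlm]) shs)"]
      length_css lab
    by (simp add: prev_Dlm prev_def shs)
qed

lemma greedy_decoding_correct:
  fixes S :: "('v, 'c) cstruct"
  assumes wf: "wf_struct S" and fin: "finite (chains S)" and d2: "2 \<le> depth S"
    and ts: "test_support S K k inp lab" and k: "1 \<le> k"
  shows "(\<exists>out. gen S inp out) \<and> \<not> infinite_run S inp \<and> (\<forall>out. gen S inp out \<longrightarrow> dec out = dec lab)"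
proof -
  obtain vs q css P' q0 css0 rest where ch: "is_chain S vs" and lv: "length vs = depth S"
    and lc: "length css = length vs" and lc0: "length css0 = length vs"
    and prev: "P' @ [Dlm] = processed S vs q0 css0 @ rest"
    and inp: "inp = P' @ Dlm # take (3 + length (hd css) + 4) (processed S vs q css)"
    and lab: "lab = drop (3 + length (hd css) + 4) (processed S vs q css)"
    by (rule test_support_split[OF ts k])
  define vals where "vals = chain_vals S vs q"
  have len: "2 \<le> length vs" using lv d2 by simp
  have dist: "distinct vs" using longest_chain_distinct[OF ch fin lv] .
  interpret follows_label S vs vals P'
  proof
    show "next_vtx (vs ! (i - 1)) (P' @ [Dlm]) = Some (Vtx (vs ! i))"
      if "1 \<le> i" "i < length vs" for i
      unfolding prev by (rule next_vtx_processed[OF dist lc0 that])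
  qed (use wf len dist ch in \<open>simp_all add: vals_def chain_vals_nth_Suc\<close>)
  define H :: "('v, 'c) tok list" where "H = [Eq, Qu] @ map Ctx (css ! 0)"
  note first = processed_first_block[OF lc len, of S q, folded vals_def H_def]
  have st: "on_track 1 H [] 0 (take (3 + length (hd css) + 4) (processed S vs q css))"
    unfolding on_track_def first H_def using len by (auto simp: dec_map_Ctx_append)
  have "dec (take (3 + length (hd css) + 4) (processed S vs q css) @ out) = (vs ! 0, vals ! 0) # dec out"
    for out unfolding first H_def by (simp add: dec_append_Cm dec_map_Ctx_append)
  moreover have "pairs (length vs) = (vs ! 0, vals ! 0) # map (\<lambda>j. (vs ! j, vals ! j)) [1..<length vs]"
    using len by (subst upt_conv_Cons) auto
  ultimately show ?thesis
    using greedy_decoding_follows_label[OF st] first(2) unfolding inp lab by auto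
qed

lemma measure_pmf_prob_le_of_set_pmf_subset:
  assumes "set_pmf D \<subseteq> A"
  shows "measure_pmf.prob D B \<le> measure_pmf.prob D A"
proof -
  have "measure_pmf.prob D A = 1"
    using assms by (subst measure_pmf.prob_eq_1) (auto simp: AE_measure_pmf_iff)
  then show ?thesis using measure_pmf.prob_le_1 by simp
qed

theorem lemma2:
  fixes S :: "('v, 'c) cstruct" and K :: nat
  assumes "wf_struct S"
    and "finite (chains S)"
    and "2 \<le> depth S"
  shows "(\<forall>k inp lab. 1 \<le> k \<longrightarrow> test_support S K k inp lab \<longrightarrow>
            (\<exists>out. gen S inp out) \<and> \<not> infinite_run S inp \<and>
            (\<forall>out. gen S inp out \<longrightarrow> dec out = dec lab))
       \<and> (\<forall>k. 1 \<le> k \<and> k \<le> K - 1 \<longrightarrow>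
            (\<forall>(D :: (('v, 'c) tok list \<times> ('v, 'c) tok list) pmf)
               (pr :: ('v, 'c) tok list \<Rightarrow> ('v, 'c) tok list)
               (f :: ('v, 'c) tok list \<Rightarrow> ('v, 'c) tok list).
               set_pmf D \<subseteq> {(i, l). test_support S K k i l} \<longrightarrow>
               (\<forall>(i, l) \<in> set_pmf D. gen S i (pr i)) \<longrightarrow>
               - measure_pmf.prob D {(i, l). dec (pr i) = dec l}
                 \<le> - measure_pmf.prob D {(i, l). dec (f i) = dec l}))"
proof (intro conjI allI impI)
  fix k inp lab
  assume "1 \<le> k" "test_support S K k inp lab"
  note correct = greedy_decoding_correct[OF assms this(2,1)]
  then show "\<exists>out. gen S inp out" "\<not> infinite_run S inp" by blast+
  show "\<And>out. gen S inp out \<Longrightarrow> dec out = dec lab" using correct by blast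
next
  fix k D and pr f :: "('v, 'c) tok list \<Rightarrow> ('v, 'c) tok list"
  assume "1 \<le> k \<and> k \<le> K - 1" "set_pmf D \<subseteq> {(i, l). test_support S K k i l}"
    "\<forall>(i, l) \<in> set_pmf D. gen S i (pr i)"
  then have "set_pmf D \<subseteq> {(i, l). dec (pr i) = dec l}"
    using greedy_decoding_correct[OF assms] by fastforce
  then show "- measure_pmf.prob D {(i, l). dec (pr i) = dec l}
      \<le> - measure_pmf.prob D {(i, l). dec (f i) = dec l}"
    using measure_pmf_prob_le_of_set_pmf_subset by (simp only: neg_le_iff_le)
qed

end
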